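(* Let $H$ be a complex infinite-dimensional separable Hilbert space and let $(f_n)_{n=1}^\infty$ be a frame for $H$ with optimal upper frame bound $B$ and analysis operator $U$, such that its excess $e((f_n)_{n=1}^\infty)$ is finite and $\dim\operatorname{Im}(B\cdot I-U^*U)<\infty$. Then $\sum_{n=1}^\infty(B-\|f_n\|^2)<\infty$.
   Context: The analysis operator is $U:H\to\ell^2$, $Ux=(\langle x,f_n\rangle)_n$. The optimal upper frame bound is the infimum of all $B$ with $\sum_n|\langle x,f_n\rangle|^2\le B\|x\|^2$ for all $x$. The excess of a frame is the maximal number of elements that can be deleted so that the remaining sequence is still a frame for $H$. *)

theory Defs
  imports "HOL-Analysis.Analysis" "HOL-Library.Extended_Nat"
begin

class complex_vector = real_vector +
  fixes scaleC :: "complex \<Rightarrow> 'a \<Rightarrow> 'a"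
  assumes scaleC_of_real: "scaleC (complex_of_real r) x = scaleR r x"
    and scaleC_add_right: "scaleC a (x + y) = scaleC a x + scaleC a y"
    and scaleC_add_left: "scaleC (a + b) x = scaleC a x + scaleC b x"
    and scaleC_scaleC: "scaleC a (scaleC b x) = scaleC (a * b) x"
    and scaleC_one: "scaleC 1 x = x"

class complex_inner = complex_vector + real_normed_vector +
  fixes cinner :: "'a \<Rightarrow> 'a \<Rightarrow> complex"
  assumes cinner_commute: "cinner x y = cnj (cinner y x)"
    and cinner_add_left: "cinner (x + y) z = cinner x z + cinner y z"
    and cinner_scaleC_left: "cinner (scaleC c x) y = c * cinner x y"
    and cinner_self_Im: "Im (cinner x x) = 0"
    and cinner_self_Re_nonneg: "0 \<le> Re (cinner x x)"
    and cinner_self_eq_zero: "cinner x x = 0 \<longleftrightarrow> x = 0"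
    and norm_eq_sqrt_cinner: "norm x = sqrt (Re (cinner x x))"

definition cspan :: "'a::complex_vector set \<Rightarrow> 'a set" where
  "cspan S = {y. \<exists>F c. finite F \<and> F \<subseteq> S \<and> y = (\<Sum>x\<in>F. scaleC (c x) x)}"

definition finite_dim_c :: "'a::complex_vector set \<Rightarrow> bool" where
  "finite_dim_c V \<longleftrightarrow> (\<exists>F. finite F \<and> V \<subseteq> cspan F)"

definition frame_on :: "nat set \<Rightarrow> (nat \<Rightarrow> 'a::complex_inner) \<Rightarrow> bool" where
  "frame_on I f \<longleftrightarrow> (\<exists>A B. 0 < A \<and> (\<forall>x.
      (\<lambda>n. (cmod (cinner x (f n)))\<^sup>2) summable_on I \<and>
      A * (norm x)\<^sup>2 \<le> (\<Sum>\<^sub>\<infinity>n\<in>I. (cmod (cinner x (f n)))\<^sup>2) \<and>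
      (\<Sum>\<^sub>\<infinity>n\<in>I. (cmod (cinner x (f n)))\<^sup>2) \<le> B * (norm x)\<^sup>2))"

definition frame :: "(nat \<Rightarrow> 'a::complex_inner) \<Rightarrow> bool" where
  "frame f \<longleftrightarrow> frame_on UNIV f"

definition opt_upper_bound :: "(nat \<Rightarrow> 'a::complex_inner) \<Rightarrow> real" where
  "opt_upper_bound f = Inf {B. \<forall>x. (\<Sum>\<^sub>\<infinity>n. (cmod (cinner x (f n)))\<^sup>2) \<le> B * (norm x)\<^sup>2}"

text \<open>Frame operator U*U x = sum_n <x,f_n> f_n.\<close>
definition frame_op :: "(nat \<Rightarrow> 'a::complex_inner) \<Rightarrow> 'a \<Rightarrow> 'a" where
  "frame_op f x = (\<Sum>n. scaleC (cinner x (f n)) (f n))"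

definition ecard :: "'b set \<Rightarrow> enat" where
  "ecard S = (if finite S then enat (card S) else \<infinity>)"

definition excess :: "(nat \<Rightarrow> 'a::complex_inner) \<Rightarrow> enat" where
  "excess f = Sup {ecard S | S. frame_on (- S) f}"

end

theory Submission
  imports Defs
begin

text \<open>Let T: \<ell>^2 \<rightarrow> H, c \<mapsto> \<Sum> c_n f_n, be the synthesis operator, so that U = T^* and
  the frame operator is S = T T^*. The vectors d_n = e_n - U f_n / B of \<ell>^2 have
  diagonal entries 1 - \<parallel>f_n\<parallel>^2 / B \<ge> 0, and T d_n = (B f_n - S f_n) / B lies in the
  finite-dimensional range of B - S. So on the span W of the first N vectors d_n the kernel of T
  has codimension at most dim Im(B - S). A kernel of dimension m provides m coordinates K and kernel
  vectors equal to e_k on K; they express each f_k, k \<in> K, through the f_n outside K, so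
  deleting K leaves a frame and m is at most the excess. Hence dim W \<le> e + dim Im(B - S) for all
  N, while the sum of 1 - \<parallel>f_n\<parallel>^2 / B over n < N is at most 2 dim W by expanding the d_n in an
  orthonormal basis of W.\<close>

section \<open>Complex inner product spaces\<close>

global_interpretation cvs: vector_space "scaleC :: complex \<Rightarrow> 'a \<Rightarrow> 'a::complex_vector"
  by unfold_locales (auto simp: scaleC_add_right scaleC_add_left scaleC_scaleC scaleC_one)

lemma cspan_eq_span: "cspan S = cvs.span S"
  unfolding cspan_def cvs.span_explicit by blast

lemma cvs_span_insert_eq:
  assumes "a \<in> cvs.span (insert b U)" "b \<in> cvs.span (insert a U)"
  shows "cvs.span (insert a U) = cvs.span (insert b U)"
proof -
  have "U \<subseteq> cvs.span (insert c U)" for c :: 'a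
    using cvs.span_superset by blast
  then show ?thesis
    unfolding cvs.span_eq using assms by blast
qed

locale complex_inner_product =
  fixes ip :: "'a::complex_vector \<Rightarrow> 'a \<Rightarrow> complex"
  assumes ip_commute: "ip x y = cnj (ip y x)"
    and ip_add_left: "ip (x + y) z = ip x z + ip y z"
    and ip_scaleC_left: "ip (scaleC c x) y = c * ip x y"
    and ip_self_Re_nonneg: "0 \<le> Re (ip x x)"
    and ip_self_eq_zero: "ip x x = 0 \<longleftrightarrow> x = 0"
begin

lemma ip_add_right: "ip z (x + y) = ip z x + ip z y"
  by (metis ip_commute ip_add_left complex_cnj_add)

lemma ip_scaleC_right: "ip x (scaleC c y) = cnj c * ip x y"
  by (metis ip_commute ip_scaleC_left complex_cnj_mult)

lemma ip_zero_left [simp]: "ip 0 y = 0"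
  by (metis add_cancel_right_right ip_add_left)

lemma ip_zero_right [simp]: "ip x 0 = 0"
  by (metis ip_commute ip_zero_left complex_cnj_zero)

lemma ip_minus_left: "ip (- x) y = - ip x y"
  by (metis add.right_inverse add_eq_0_iff ip_add_left ip_zero_left)

lemma ip_minus_right: "ip x (- y) = - ip x y"
  by (metis ip_commute ip_minus_left complex_cnj_minus)

lemma ip_diff_left: "ip (x - y) z = ip x z - ip y z"
  by (simp only: diff_conv_add_uminus ip_add_left ip_minus_left)

lemma ip_diff_right: "ip z (x - y) = ip z x - ip z y"
  by (simp only: diff_conv_add_uminus ip_add_right ip_minus_right)

lemma ip_sum_left: "ip (sum g A) y = (\<Sum>a\<in>A. ip (g a) y)"
  by (induct A rule: infinite_finite_induct) (auto simp: ip_add_left)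

lemma ip_eq_0_commute: "ip x y = 0 \<longleftrightarrow> ip y x = 0"
  by (metis ip_commute complex_cnj_zero)

definition ip_norm :: "'a \<Rightarrow> real" where
  "ip_norm x = sqrt (Re (ip x x))"

lemma ip_norm_nonneg: "0 \<le> ip_norm x"
  using ip_self_Re_nonneg by (simp add: ip_norm_def)

lemma power2_ip_norm: "(ip_norm x)\<^sup>2 = Re (ip x x)"
  using ip_self_Re_nonneg by (simp add: ip_norm_def)

lemma ip_self_eq_power2_ip_norm: "ip x x = complex_of_real ((ip_norm x)\<^sup>2)"
  using ip_commute[of x x] by (simp add: power2_ip_norm complex_eq_iff)

lemma cauchy_schwarz: "cmod (ip x y) \<le> ip_norm x * ip_norm y"
proof (cases "y = 0")
  case True
  then show ?thesis by (simp add: ip_norm_def)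
next
  case False
  define t where "t = ip x y / ip y y"
  have yy: "ip y y \<noteq> 0" and yy_real: "cnj (ip y y) = ip y y"
    using False ip_self_eq_zero ip_commute[of y y] by auto
  have "ip (x - scaleC t y) (x - scaleC t y) = ip x x - ip x y * cnj (ip x y) / ip y y"
    using yy ip_commute[of y x]
    by (simp add: ip_diff_left ip_diff_right ip_scaleC_left ip_scaleC_right t_def yy_real
        field_simps)
  \<comment> \<open>the squared distance from x to its projection on y\<close>
  then have "0 \<le> Re (ip x x - ip x y * cnj (ip x y) / ip y y)"
    by (metis ip_self_Re_nonneg)
  then have "0 \<le> (ip_norm x)\<^sup>2 - (cmod (ip x y))\<^sup>2 / (ip_norm y)\<^sup>2"
    by (simp only: ip_self_eq_power2_ip_norm complex_norm_square[symmetric]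
        of_real_divide[symmetric] of_real_diff[symmetric] Re_complex_of_real)
  moreover have "(ip_norm y)\<^sup>2 > 0"
    using yy ip_self_eq_power2_ip_norm[of y] by (auto simp: less_le)
  ultimately have "(cmod (ip x y))\<^sup>2 \<le> (ip_norm x * ip_norm y)\<^sup>2"
    by (simp add: pos_divide_le_eq power_mult_distrib)
  then show ?thesis
    by (rule power2_le_imp_le[OF _ mult_nonneg_nonneg[OF ip_norm_nonneg ip_norm_nonneg]])
qed

definition orthonormal :: "'a set \<Rightarrow> bool" where
  "orthonormal U \<longleftrightarrow> (\<forall>u\<in>U. ip u u = 1) \<and> (\<forall>u\<in>U. \<forall>v\<in>U. u \<noteq> v \<longrightarrow> ip u v = 0)"

lemma ip_span_eq_0:
  assumes "\<And>s. s \<in> S \<Longrightarrow> ip s z = 0" and "x \<in> cvs.span S"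
  shows "ip x z = 0"
  using assms(2)
proof (induct rule: cvs.span_induct_alt)
  case base
  then show ?case by simp
next
  case (step c x y)
  then show ?case using assms(1) by (simp add: ip_add_left ip_scaleC_left)
qed

lemma ip_orthonormal_sum_left:
  assumes "finite U" "orthonormal U" "v \<in> U"
  shows "ip (\<Sum>u\<in>U. scaleC (c u) u) v = c v"
proof -
  have "ip (\<Sum>u\<in>U. scaleC (c u) u) v = (\<Sum>u\<in>U. c u * ip u v)"
    by (simp add: ip_sum_left ip_scaleC_left)
  also have "\<dots> = (\<Sum>u\<in>{v}. c u * ip u v)"
    using assms by (intro sum.mono_neutral_right) (auto simp: orthonormal_def)
  also have "\<dots> = c v"
    using assms by (simp add: orthonormal_def)
  finally show ?thesis .
qed

lemma orthonormal_expansion: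
  assumes "finite U" "orthonormal U" "x \<in> cvs.span U"
  shows "x = (\<Sum>u\<in>U. scaleC (ip x u) u)"
proof -
  define y where "y = x - (\<Sum>u\<in>U. scaleC (ip x u) u)"
  have "y \<in> cvs.span U"
    unfolding y_def
    by (intro cvs.span_diff[OF assms(3)] cvs.span_sum cvs.span_scale cvs.span_base)
  moreover have "ip u y = 0" if "u \<in> U" for u
    using that assms ip_eq_0_commute[of u y]
    by (simp add: y_def ip_diff_left ip_orthonormal_sum_left)
  ultimately have "ip y y = 0"
    using ip_span_eq_0 by blast
  then show ?thesis
    unfolding y_def ip_self_eq_zero by simp
qed

lemma ip_self_normalize:
  assumes "x \<noteq> 0"
  shows "ip (scaleC (of_real (1 / ip_norm x)) x) (scaleC (of_real (1 / ip_norm x)) x) = 1"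
proof -
  have "ip_norm x \<noteq> 0"
    using assms ip_self_eq_zero ip_self_eq_power2_ip_norm by fastforce
  moreover have "ip (scaleC c x) (scaleC c x) = c * cnj c * ip x x" for c
    by (simp add: ip_scaleC_left ip_scaleC_right)
  ultimately show ?thesis
    by (simp add: ip_self_eq_power2_ip_norm[of x] power2_eq_square)
qed

lemma gram_schmidt_step:
  assumes "finite U" "orthonormal U"
  obtains W where "finite W" "orthonormal W" "cvs.span W = cvs.span (insert x U)"
proof -
  define p where "p = (\<Sum>u\<in>U. scaleC (ip x u) u)"
  define v where "v = x - p"
  have p: "p \<in> cvs.span U"
    unfolding p_def by (intro cvs.span_sum cvs.span_scale cvs.span_base)
  have v_orth: "ip v u = 0" if "u \<in> U" for u
    using that assms by (simp add: v_def p_def ip_diff_left ip_orthonormal_sum_left)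
  have "p \<in> cvs.span (insert y U)" for y
    using p cvs.span_mono[of U "insert y U"] by blast
  moreover have "x - p \<in> cvs.span (insert (x - p) U)" "x \<in> cvs.span (insert x U)"
    by (simp_all add: cvs.span_base)
  ultimately have "x - p \<in> cvs.span (insert x U)" "(x - p) + p \<in> cvs.span (insert (x - p) U)"
    by (blast intro: cvs.span_diff cvs.span_add)+
  then have span_v: "cvs.span (insert v U) = cvs.span (insert x U)"
    unfolding v_def by (intro cvs_span_insert_eq) simp_all
  show thesis
  proof (cases "v = 0")
    case True
    then show thesis
      using that[of U] assms span_v by simp
  next
    case False
    define w where "w = scaleC (of_real (1 / ip_norm v)) v"
    have w_orth: "ip w u = 0" "ip u w = 0" if "u \<in> U" for u
      using v_orth[OF that] ip_eq_0_commute by (auto simp: w_def ip_scaleC_left ip_scaleC_right)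
    have ww: "ip w w = 1"
      unfolding w_def using False by (rule ip_self_normalize)
    then have "w \<notin> U"
      using w_orth by force
    then have "orthonormal (insert w U)"
      using assms(2) ww w_orth unfolding orthonormal_def by auto
    moreover have "v = scaleC (of_real (ip_norm v)) w"
      using ww False by (auto simp: w_def ip_self_eq_zero)
    then have "cvs.span (insert w U) = cvs.span (insert v U)"
      unfolding w_def by (metis cvs.span_base cvs.span_scale cvs_span_insert_eq insertI1)
    ultimately show thesis
      using that[of "insert w U"] assms span_v by simp
  qed
qed

lemma gram_schmidt:
  assumes "finite S"
  obtains U where "finite U" "orthonormal U" "cvs.span U = cvs.span S"
  using assms
proof (induct arbitrary: thesis rule: finite_induct)
  case empty
  show ?case by (rule empty.prems[of "{}"]) (simp_all add: orthonormal_def)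
next
  case (insert x S)
  obtain U where "finite U" "orthonormal U" "cvs.span U = cvs.span S"
    using insert.hyps(3) by blast
  moreover obtain W where "finite W" "orthonormal W" "cvs.span W = cvs.span (insert x U)"
    using gram_schmidt_step calculation(1,2) by blast
  ultimately show ?case
    using insert.prems by (simp add: cvs.span_insert)
qed

lemma ip_orthonormal_diff_span:
  assumes "orthonormal U" "U' \<subseteq> U" "i \<in> U - U'" "j \<in> U - U'" "p \<in> cvs.span U'"
  shows "ip (i - p) j = (if i = j then 1 else 0)"
proof -
  have "ip p j = 0"
  proof (rule ip_span_eq_0[OF _ assms(5)])
    fix s
    assume "s \<in> U'"
    then have "s \<in> U" "j \<in> U" "s \<noteq> j"
      using assms(2-4) by auto
    then show "ip s j = 0"
      using assms(1) unfolding orthonormal_def by blast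
  qed
  then show ?thesis
    using assms(1,3,4) unfolding orthonormal_def by (simp add: ip_diff_left)
qed

lemma biorthogonal_not_in_span:
  assumes "\<And>i j. i \<in> V \<Longrightarrow> j \<in> V \<Longrightarrow> ip (y i) (z j) = (if i = j then 1 else 0)" "i \<in> V"
  shows "y i \<notin> cvs.span (y ` (V - {i}))"
proof
  have "ip s (z i) = 0" if s: "s \<in> y ` (V - {i})" for s
  proof -
    obtain j where "j \<in> V" "j \<noteq> i" "s = y j"
      using s by blast
    then show ?thesis
      using assms by simp
  qed
  moreover assume "y i \<in> cvs.span (y ` (V - {i}))"
  ultimately have "ip (y i) (z i) = 0"
    by (rule ip_span_eq_0)
  then show False
    using assms by simp
qed

end

section \<open>Square-summable sequences\<close>

lemma cmod_mult_le: "cmod (a * b) \<le> ((cmod a)\<^sup>2 + (cmod b)\<^sup>2) / 2"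
proof -
  have "0 \<le> (cmod a - cmod b)\<^sup>2"
    by simp
  then show ?thesis
    by (simp add: norm_mult power2_eq_square algebra_simps)
qed

lemma power2_cmod_add_le: "(cmod (a + b))\<^sup>2 \<le> 2 * (cmod a)\<^sup>2 + 2 * (cmod b)\<^sup>2"
proof -
  have "(cmod (a + b))\<^sup>2 \<le> (cmod a + cmod b)\<^sup>2"
    by (simp add: norm_triangle_ineq power_mono)
  also have "\<dots> \<le> 2 * (cmod a)\<^sup>2 + 2 * (cmod b)\<^sup>2"
    using cmod_mult_le[of "of_real (cmod a)" "of_real (cmod b)"]
    by (simp add: power2_eq_square algebra_simps norm_mult)
  finally show ?thesis .
qed

lemma power2_cmod_diff_le: "(cmod (a - b))\<^sup>2 \<le> 2 * (cmod a)\<^sup>2 + 2 * (cmod b)\<^sup>2"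
  using power2_cmod_add_le[of a "- b"] by simp

lemma summable_power2_cmod_add:
  assumes "summable (\<lambda>k. (cmod (a k))\<^sup>2)" "summable (\<lambda>k. (cmod (b k))\<^sup>2)"
  shows "summable (\<lambda>k. (cmod (a k + b k))\<^sup>2)"
proof (rule summable_comparison_test)
  show "\<exists>N. \<forall>k\<ge>N. norm ((cmod (a k + b k))\<^sup>2) \<le> 2 * (cmod (a k))\<^sup>2 + 2 * (cmod (b k))\<^sup>2"
    using power2_cmod_add_le by simp
  show "summable (\<lambda>k. 2 * (cmod (a k))\<^sup>2 + 2 * (cmod (b k))\<^sup>2)"
    using assms by (intro summable_add summable_mult)
qed

lemma summable_mult_if_power2_summable:
  assumes "summable (\<lambda>k. (cmod (a k))\<^sup>2)" "summable (\<lambda>k. (cmod (b k))\<^sup>2)"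
  shows "summable (\<lambda>k. a k * b k)"
proof (rule summable_norm_cancel)
  show "summable (\<lambda>k. norm (a k * b k))"
  proof (rule summable_comparison_test)
    show "\<exists>N. \<forall>k\<ge>N. norm (norm (a k * b k)) \<le> ((cmod (a k))\<^sup>2 + (cmod (b k))\<^sup>2) / 2"
      using cmod_mult_le by simp
    show "summable (\<lambda>k. ((cmod (a k))\<^sup>2 + (cmod (b k))\<^sup>2) / 2)"
      using assms by (intro summable_divide summable_add)
  qed
qed

typedef l2 = "{c::nat \<Rightarrow> complex. summable (\<lambda>k. (cmod (c k))\<^sup>2)}"
  morphisms l2_seq Abs_l2
  by (intro exI[of _ "\<lambda>_. 0"]) simp

setup_lifting type_definition_l2

lemma summable_power2_l2_seq: "summable (\<lambda>k. (cmod (l2_seq x k))\<^sup>2)"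
  using l2_seq[of x] by simp

lemma l2_seq_Abs_l2:
  assumes "summable (\<lambda>k. (cmod (g k))\<^sup>2)"
  shows "l2_seq (Abs_l2 g) = g"
  using assms by (simp add: Abs_l2_inverse)

lemma l2_eqI: "(\<And>k. l2_seq x k = l2_seq y k) \<Longrightarrow> x = y"
  by (metis l2_seq_inject ext)

instantiation l2 :: complex_vector
begin

lift_definition zero_l2 :: l2 is "\<lambda>_. 0"
  by simp

lift_definition plus_l2 :: "l2 \<Rightarrow> l2 \<Rightarrow> l2" is "\<lambda>a b k. a k + b k"
  by (rule summable_power2_cmod_add)

lift_definition uminus_l2 :: "l2 \<Rightarrow> l2" is "\<lambda>a k. - a k"
  by simp

lift_definition minus_l2 :: "l2 \<Rightarrow> l2 \<Rightarrow> l2" is "\<lambda>a b k. a k - b k"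
proof -
  fix a b :: "nat \<Rightarrow> complex"
  assume "summable (\<lambda>k. (cmod (a k))\<^sup>2)" "summable (\<lambda>k. (cmod (b k))\<^sup>2)"
  then show "summable (\<lambda>k. (cmod (a k - b k))\<^sup>2)"
    using summable_power2_cmod_add[of a "\<lambda>k. - b k"] by simp
qed

lift_definition scaleR_l2 :: "real \<Rightarrow> l2 \<Rightarrow> l2" is "\<lambda>r a k. complex_of_real r * a k"
  by (simp add: norm_mult power_mult_distrib summable_mult)

lift_definition scaleC_l2 :: "complex \<Rightarrow> l2 \<Rightarrow> l2" is "\<lambda>r a k. r * a k"
  by (simp add: norm_mult power_mult_distrib summable_mult)

instance
  by intro_classes (transfer; auto simp: algebra_simps)+

end

lemma l2_seq_zero [simp]: "l2_seq 0 k = 0"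
  by transfer simp

lemma l2_seq_add [simp]: "l2_seq (x + y) k = l2_seq x k + l2_seq y k"
  by transfer simp

lemma l2_seq_diff [simp]: "l2_seq (x - y) k = l2_seq x k - l2_seq y k"
  by transfer simp

lemma l2_seq_scaleC [simp]: "l2_seq (scaleC c x) k = c * l2_seq x k"
  by transfer simp

lemma l2_seq_sum: "l2_seq (sum g A) k = (\<Sum>a\<in>A. l2_seq (g a) k)"
  by (induct A rule: infinite_finite_induct) auto

lift_definition l2_unit :: "nat \<Rightarrow> l2" is "\<lambda>n k. if k = n then 1 else 0"
proof -
  fix n :: nat
  have "(\<lambda>k. (cmod (if k = n then (1::complex) else 0))\<^sup>2) = (\<lambda>k. if k = n then 1 else 0)"
    by auto
  then show "summable (\<lambda>k. (cmod (if k = n then (1::complex) else 0))\<^sup>2)"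
    using sums_single[of n "\<lambda>_. 1::real"] by (simp add: sums_summable)
qed

definition l2_inner :: "l2 \<Rightarrow> l2 \<Rightarrow> complex" where
  "l2_inner x y = (\<Sum>k. l2_seq x k * cnj (l2_seq y k))"

lemma l2_inner_sums: "(\<lambda>k. l2_seq x k * cnj (l2_seq y k)) sums l2_inner x y"
  unfolding l2_inner_def
  by (intro summable_sums summable_mult_if_power2_summable) (simp_all add: summable_power2_l2_seq)

lemma l2_inner_self: "l2_inner x x = complex_of_real (\<Sum>k. (cmod (l2_seq x k))\<^sup>2)"
proof -
  have "(\<lambda>k. complex_of_real ((cmod (l2_seq x k))\<^sup>2)) sums complex_of_real (\<Sum>k. (cmod (l2_seq x k))\<^sup>2)"
    using summable_power2_l2_seq[of x] by (intro sums_of_real_iff[THEN iffD2] summable_sums)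
  moreover have "(\<lambda>k. l2_seq x k * cnj (l2_seq x k)) = (\<lambda>k. complex_of_real ((cmod (l2_seq x k))\<^sup>2))"
    by (simp only: complex_norm_square)
  ultimately show ?thesis
    using l2_inner_sums[of x x] by (metis sums_unique2)
qed

interpretation l2: complex_inner_product l2_inner
proof
  fix x y z :: l2 and c :: complex
  show "l2_inner x y = cnj (l2_inner y x)"
    using sums_cnj[THEN iffD2, OF l2_inner_sums[of y x]] l2_inner_sums[of x y]
    by (simp add: mult.commute sums_unique2)
  show "l2_inner (x + y) z = l2_inner x z + l2_inner y z"
    using sums_add[OF l2_inner_sums[of x z] l2_inner_sums[of y z]] l2_inner_sums[of "x + y" z]
    by (simp add: distrib_right sums_unique2)
  show "l2_inner (scaleC c x) y = c * l2_inner x y"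
    using sums_mult[OF l2_inner_sums[of x y], of c] l2_inner_sums[of "scaleC c x" y]
    by (simp add: mult.assoc sums_unique2)
  show "0 \<le> Re (l2_inner x x)"
    unfolding l2_inner_self using summable_power2_l2_seq[of x] by (simp add: suminf_nonneg)
  show "l2_inner x x = 0 \<longleftrightarrow> x = 0"
    unfolding l2_inner_self using suminf_eq_zero_iff[OF summable_power2_l2_seq[of x]]
    by (auto intro: l2_eqI)
qed

lemma power2_l2_norm: "(l2.ip_norm x)\<^sup>2 = (\<Sum>k. (cmod (l2_seq x k))\<^sup>2)"
  by (simp add: l2.power2_ip_norm l2_inner_self)

lemma sum_power2_l2_seq_le:
  assumes "finite I"
  shows "(\<Sum>k\<in>I. (cmod (l2_seq x k))\<^sup>2) \<le> (l2.ip_norm x)\<^sup>2"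
  unfolding power2_l2_norm using summable_power2_l2_seq[of x] assms
  by (intro sum_le_suminf) auto

lemma l2_inner_unit_left: "l2_inner (l2_unit n) x = cnj (l2_seq x n)"
proof -
  have "(\<lambda>k. l2_seq (l2_unit n) k * cnj (l2_seq x k)) = (\<lambda>k. if k = n then cnj (l2_seq x k) else 0)"
    by (auto simp: l2_unit.rep_eq)
  then show ?thesis
    using sums_single[of n "\<lambda>k. cnj (l2_seq x k)"] l2_inner_sums[of "l2_unit n" x]
    by (simp add: sums_unique2)
qed

text \<open>One step of Gaussian elimination: the part of y off the coordinates K is nonzero and vanishes
  on K, so it supplies a new coordinate.\<close>

lemma coordinates_extend:
  assumes K: "finite K"
    and W: "\<And>k. k \<in> K \<Longrightarrow> W k \<in> cvs.span S"
      "\<And>k l. k \<in> K \<Longrightarrow> l \<in> K \<Longrightarrow> l2_seq (W k) l = (if l = k then 1 else 0)"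
    and y: "y \<notin> cvs.span S"
  obtains k0 W' where "k0 \<notin> K"
    "\<And>k. k \<in> insert k0 K \<Longrightarrow> W' k \<in> cvs.span (insert y S)"
    "\<And>k l. k \<in> insert k0 K \<Longrightarrow> l \<in> insert k0 K \<Longrightarrow> l2_seq (W' k) l = (if l = k then 1 else 0)"
proof -
  have span_S: "cvs.span S \<subseteq> cvs.span (insert y S)"
    by (rule cvs.span_mono) auto
  define p where "p = (\<Sum>k\<in>K. scaleC (l2_seq y k) (W k))"
  define u where "u = y - p"
  have p: "p \<in> cvs.span S"
    unfolding p_def using W(1) by (intro cvs.span_sum cvs.span_scale)
  then have u: "u \<in> cvs.span (insert y S)"
    unfolding u_def using p span_S by (intro cvs.span_diff) (auto intro: cvs.span_base)
  have "u \<noteq> 0"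
    using y p unfolding u_def by (metis eq_iff_diff_eq_0)
  then obtain k0 where k0: "l2_seq u k0 \<noteq> 0"
    using l2_eqI[of u 0] by auto
  have u_K: "l2_seq u k = 0" if "k \<in> K" for k
  proof -
    have "l2_seq p k = (\<Sum>k'\<in>K. if k' = k then l2_seq y k' else 0)"
      unfolding p_def l2_seq_sum using W(2) that by (intro sum.cong) auto
    then show ?thesis
      using K that by (simp add: u_def)
  qed
  then have "k0 \<notin> K"
    using k0 by blast
  define w0 where "w0 = scaleC (1 / l2_seq u k0) u"
  have w0: "l2_seq w0 k0 = 1" "\<And>l. l \<in> K \<Longrightarrow> l2_seq w0 l = 0"
    using k0 u_K by (simp_all add: w0_def)
  have "w0 \<in> cvs.span (insert y S)"
    unfolding w0_def using u by (rule cvs.span_scale)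
  define W' where "W' k = (if k = k0 then w0 else W k - scaleC (l2_seq (W k) k0) w0)" for k
  show thesis
  proof
    show "k0 \<notin> K" by fact
    show "W' k \<in> cvs.span (insert y S)" if "k \<in> insert k0 K" for k
      using that W(1) span_S \<open>w0 \<in> _\<close>
      by (auto simp: W'_def intro: cvs.span_diff cvs.span_scale)
    show "l2_seq (W' k) l = (if l = k then 1 else 0)"
      if "k \<in> insert k0 K" "l \<in> insert k0 K" for k l
      using that W(2) w0 \<open>k0 \<notin> K\<close> by (auto simp: W'_def)
  qed
qed

lemma coordinates_of_independent_family:
  assumes "finite V" "\<And>i. i \<in> V \<Longrightarrow> y i \<notin> cvs.span (y ` (V - {i}))"
  obtains K where "finite K" "card K = card V"
    "\<And>k. k \<in> K \<Longrightarrow> \<exists>w \<in> cvs.span (y ` V). \<forall>l\<in>K. l2_seq w l = (if l = k then 1 else 0)"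
  using assms
proof (induct arbitrary: thesis rule: finite_induct)
  case empty
  show ?case by (rule empty.prems(1)[of "{}"]) simp_all
next
  case (insert i V)
  have "y j \<notin> cvs.span (y ` (V - {j}))" if "j \<in> V" for j
    using insert.prems(2)[of j] that cvs.span_mono[of "y ` (V - {j})" "y ` (insert i V - {j})"] by auto
  then obtain K where K: "finite K" "card K = card V"
    and "\<And>k. k \<in> K \<Longrightarrow> \<exists>w \<in> cvs.span (y ` V). \<forall>l\<in>K. l2_seq w l = (if l = k then 1 else 0)"
    using insert.hyps(3) by blast
  then obtain W where W: "\<And>k. k \<in> K \<Longrightarrow> W k \<in> cvs.span (y ` V)"
    "\<And>k l. k \<in> K \<Longrightarrow> l \<in> K \<Longrightarrow> l2_seq (W k) l = (if l = k then 1 else 0)"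
    by metis
  have "insert i V - {i} = V"
    using insert.hyps(2) by blast
  then have yi: "y i \<notin> cvs.span (y ` V)"
    using insert.prems(2)[of i] by simp
  obtain k0 W' where "k0 \<notin> K"
    "\<And>k. k \<in> insert k0 K \<Longrightarrow> W' k \<in> cvs.span (insert (y i) (y ` V))"
    "\<And>k l. k \<in> insert k0 K \<Longrightarrow> l \<in> insert k0 K \<Longrightarrow> l2_seq (W' k) l = (if l = k then 1 else 0)"
    using coordinates_extend[OF K(1) W yi] by blast
  then show ?case
    using insert.prems(1)[of "insert k0 K"] K insert.hyps(1,2) by auto
qed

lemma power2_cmod_suminf_le:
  assumes "summable (\<lambda>k. (cmod (a k))\<^sup>2)" "summable (\<lambda>k. (cmod (b k))\<^sup>2)"
  shows "(cmod (\<Sum>k. a k * cnj (b k)))\<^sup>2 \<le> (\<Sum>k. (cmod (a k))\<^sup>2) * (\<Sum>k. (cmod (b k))\<^sup>2)"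
proof -
  have "cmod (l2_inner (Abs_l2 a) (Abs_l2 b)) \<le> l2.ip_norm (Abs_l2 a) * l2.ip_norm (Abs_l2 b)"
    by (rule l2.cauchy_schwarz)
  then have "(cmod (l2_inner (Abs_l2 a) (Abs_l2 b)))\<^sup>2 \<le> (l2.ip_norm (Abs_l2 a))\<^sup>2 * (l2.ip_norm (Abs_l2 b))\<^sup>2"
    by (simp add: power_mono flip: power_mult_distrib)
  then show ?thesis
    using assms by (simp add: l2_inner_def power2_l2_norm l2_seq_Abs_l2)
qed

section \<open>Frames and their synthesis operator\<close>

global_interpretation cinner: complex_inner_product "cinner :: 'a::complex_inner \<Rightarrow> 'a \<Rightarrow> complex"
  by unfold_locales
    (fact cinner_commute cinner_add_left cinner_scaleC_left cinner_self_Re_nonneg cinner_self_eq_zero)+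

lemma cinner_ip_norm [simp]: "cinner.ip_norm x = norm x"
  by (simp add: cinner.ip_norm_def norm_eq_sqrt_cinner)

lemma cmod_cinner_le: "cmod (cinner x y) \<le> norm x * norm y"
  using cinner.cauchy_schwarz[of x y] by simp

lemma cinner_self_eq_power2_norm: "cinner x x = complex_of_real ((norm x)\<^sup>2)"
  using cinner.ip_self_eq_power2_ip_norm[of x] by simp

lemma cmod_cinner_commute: "cmod (cinner x y) = cmod (cinner y x)"
  by (metis cinner_commute complex_mod_cnj)

lemma cinner_eqI:
  assumes "\<And>z. cinner x z = cinner y z"
  shows "x = y"
  using assms[of "x - y"] cinner_self_eq_zero[of "x - y"] by (simp add: cinner.ip_diff_left)

lemma tendsto_cinner_left:
  assumes "X \<longlonglongrightarrow> L"
  shows "(\<lambda>n. cinner (X n) y) \<longlonglongrightarrow> cinner L y"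
proof -
  have "\<forall>\<^sub>F n in sequentially. norm (cinner (X n) y - cinner L y) \<le> norm (X n - L) * norm y"
    using cmod_cinner_le[of "X _ - L" y] by (simp add: cinner.ip_diff_left)
  moreover have "(\<lambda>n. norm (X n - L)) \<longlonglongrightarrow> 0"
    using assms by (intro tendsto_norm_zero) (simp add: LIM_zero)
  then have "(\<lambda>n. norm (X n - L) * norm y) \<longlonglongrightarrow> 0"
    by (rule tendsto_mult_left_zero)
  ultimately have "(\<lambda>n. cinner (X n) y - cinner L y) \<longlonglongrightarrow> 0"
    by (rule Lim_null_comparison)
  then show ?thesis
    by (simp add: LIM_zero_iff)
qed

lemma summable_if_Cauchy_sums:
  fixes g :: "nat \<Rightarrow> 'a::{real_normed_vector, complete_space}"
  assumes "\<And>e. e > 0 \<Longrightarrow> \<exists>N. \<forall>m\<ge>N. \<forall>n. norm (sum g {m..<n}) < e"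
  shows "summable g"
  unfolding summable_iff_convergent
proof (intro Cauchy_convergent CauchyI)
  fix e :: real
  assume "0 < e"
  then obtain N where N: "\<And>m n. m \<ge> N \<Longrightarrow> norm (sum g {m..<n}) < e"
    using assms by blast
  have "norm (sum g {..<m} - sum g {..<n}) < e" if "m \<ge> N" "n \<ge> N" for m n
  proof (cases m n rule: le_cases)
    case le
    then show ?thesis
      by (metis N finite_lessThan lessThan_minus_lessThan lessThan_subset_iff norm_minus_commute
          sum_diff that(1))
  next
    case ge
    then show ?thesis
      by (metis N finite_lessThan lessThan_minus_lessThan lessThan_subset_iff sum_diff that(2))
  qed
  then show "\<exists>M. \<forall>m\<ge>M. \<forall>n\<ge>M. norm (sum g {..<m} - sum g {..<n}) < e"
    by blast
qed

lemma infsum_eq_suminf_nonneg: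
  fixes g :: "nat \<Rightarrow> real"
  assumes "summable g" "\<And>n. 0 \<le> g n"
  shows "infsum g UNIV = suminf g"
  using sums_nonneg_imp_has_sum[OF summable_sums[OF assms(1)] assms(2)] by (rule infsumI)

locale nontrivial_frame =
  fixes f :: "nat \<Rightarrow> 'a::{complex_inner, complete_space}"
  assumes frame: "frame f"
    and nontrivial: "\<exists>x::'a. x \<noteq> 0"
begin

abbreviation Bopt :: real where
  "Bopt \<equiv> opt_upper_bound f"

definition coeff_sq :: "'a \<Rightarrow> nat \<Rightarrow> real" where
  "coeff_sq x n = (cmod (cinner x (f n)))\<^sup>2"

lemma coeff_sq_nonneg: "0 \<le> coeff_sq x n"
  by (simp add: coeff_sq_def)

lemma coeff_sq_zero [simp]: "coeff_sq 0 = (\<lambda>_. 0)"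
  by (simp add: coeff_sq_def fun_eq_iff)

lemma frame_bounds:
  obtains A B where "0 < A"
    "\<And>x. summable (coeff_sq x)"
    "\<And>x. A * (norm x)\<^sup>2 \<le> suminf (coeff_sq x)"
    "\<And>x. suminf (coeff_sq x) \<le> B * (norm x)\<^sup>2"
proof -
  obtain A B where "0 < A" and AB: "\<And>x. coeff_sq x summable_on UNIV \<and>
      A * (norm x)\<^sup>2 \<le> infsum (coeff_sq x) UNIV \<and> infsum (coeff_sq x) UNIV \<le> B * (norm x)\<^sup>2"
    using frame unfolding frame_def frame_on_def coeff_sq_def[abs_def] by blast
  moreover have "summable (coeff_sq x)" for x
    using AB[of x] summable_on_UNIV_nonneg_real_iff[of "coeff_sq x"] coeff_sq_nonneg by blast
  moreover note infsum_eq_suminf_nonneg[OF this coeff_sq_nonneg]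
  ultimately show thesis
    using that[of A B] by simp
qed

lemma summable_coeff_sq: "summable (coeff_sq x)"
  using frame_bounds by metis

lemma sum_coeff_sq_le_suminf: "sum (coeff_sq x) I \<le> suminf (coeff_sq x)" if "finite I"
  using that summable_coeff_sq coeff_sq_nonneg by (intro sum_le_suminf) auto

lemma opt_upper_bound_eq: "Bopt = Inf {B. \<forall>x. suminf (coeff_sq x) \<le> B * (norm x)\<^sup>2}"
  using infsum_eq_suminf_nonneg[OF summable_coeff_sq coeff_sq_nonneg]
  unfolding opt_upper_bound_def coeff_sq_def[abs_def] by simp

lemma suminf_coeff_sq_le: "suminf (coeff_sq x) \<le> Bopt * (norm x)\<^sup>2"
proof (cases "x = 0")
  case True
  then show ?thesis
    by simp
next
  case False
  define S where "S = {B. \<forall>x. suminf (coeff_sq x) \<le> B * (norm x)\<^sup>2}"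
  obtain B0 where "\<And>x. suminf (coeff_sq x) \<le> B0 * (norm x)\<^sup>2"
    using frame_bounds by metis
  then have "S \<noteq> {}"
    unfolding S_def by blast
  moreover have "suminf (coeff_sq x) / (norm x)\<^sup>2 \<le> B" if "B \<in> S" for B
    using that False unfolding S_def by (simp add: divide_le_eq)
  ultimately have "suminf (coeff_sq x) / (norm x)\<^sup>2 \<le> Inf S"
    by (rule cInf_greatest)
  then show ?thesis
    using False unfolding opt_upper_bound_eq S_def[symmetric] by (simp add: divide_le_eq)
qed

lemma Bopt_pos: "0 < Bopt"
proof -
  obtain A where "0 < A" and A: "\<And>x. A * (norm x)\<^sup>2 \<le> suminf (coeff_sq x)"
    using frame_bounds by metis
  obtain x :: 'a where "x \<noteq> 0"
    using nontrivial by blast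
  moreover have "A * (norm x)\<^sup>2 \<le> Bopt * (norm x)\<^sup>2"
    using A[of x] suminf_coeff_sq_le[of x] by (rule order_trans)
  ultimately have "A \<le> Bopt"
    by simp
  with \<open>0 < A\<close> show ?thesis
    by linarith
qed

lemma sum_coeff_sq_le: "sum (coeff_sq x) I \<le> Bopt * (norm x)\<^sup>2" if "finite I"
  using sum_coeff_sq_le_suminf[OF that] suminf_coeff_sq_le by (rule order_trans)

lemma power2_norm_le_Bopt: "(norm (f n))\<^sup>2 \<le> Bopt"
proof (cases "f n = 0")
  case True
  then show ?thesis
    using Bopt_pos by simp
next
  case False
  have "(norm (f n))\<^sup>2 * (norm (f n))\<^sup>2 = coeff_sq (f n) n"
    by (simp add: coeff_sq_def cinner_self_eq_power2_norm norm_power flip: power2_eq_square)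
  also have "\<dots> \<le> Bopt * (norm (f n))\<^sup>2"
    using sum_coeff_sq_le[of "{n}" "f n"] by simp
  finally have "(norm (f n))\<^sup>2 * (norm (f n))\<^sup>2 \<le> Bopt * (norm (f n))\<^sup>2" .
  then show ?thesis
    by (rule mult_right_le_imp_le) (use False in simp)
qed

lemma power2_norm_sum_le:
  assumes "finite F"
  shows "(norm (\<Sum>n\<in>F. scaleC (c n) (f n)))\<^sup>2 \<le> Bopt * (\<Sum>n\<in>F. (cmod (c n))\<^sup>2)"
proof -
  define z where "z = (\<Sum>n\<in>F. scaleC (c n) (f n))"
  define C where "C = (\<Sum>n\<in>F. (cmod (c n))\<^sup>2)"
  have "cinner z z = (\<Sum>n\<in>F. c n * cinner (f n) z)"
    unfolding z_def by (simp add: cinner.ip_sum_left cinner_scaleC_left)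
  then have "(norm z)\<^sup>2 = cmod (\<Sum>n\<in>F. c n * cinner (f n) z)"
    by (metis cinner_self_eq_power2_norm norm_of_real abs_of_nonneg zero_le_power2)
  also have "\<dots> \<le> (\<Sum>n\<in>F. \<bar>cmod (c n)\<bar> * \<bar>cmod (cinner (f n) z)\<bar>)"
    by (rule order_trans[OF norm_sum]) (simp add: norm_mult)
  also have "\<dots> \<le> sqrt C * sqrt (\<Sum>n\<in>F. coeff_sq z n)"
    using L2_set_mult_ineq[of "\<lambda>n. cmod (c n)" "\<lambda>n. cmod (cinner (f n) z)" F]
    by (simp add: L2_set_def C_def coeff_sq_def cmod_cinner_commute)
  also have "\<dots> \<le> sqrt C * sqrt (Bopt * (norm z)\<^sup>2)"
    using sum_coeff_sq_le[OF assms]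
    by (intro mult_left_mono real_sqrt_le_mono) (simp_all add: C_def sum_nonneg)
  also have "\<dots> = sqrt (C * Bopt) * norm z"
    using Bopt_pos by (simp add: real_sqrt_mult)
  finally have "norm z * norm z \<le> sqrt (C * Bopt) * norm z"
    by (simp add: power2_eq_square)
  moreover have CB: "0 \<le> C * Bopt"
    using Bopt_pos by (simp add: C_def sum_nonneg)
  ultimately have "norm z \<le> sqrt (C * Bopt)"
    by (cases "z = 0") (auto intro: mult_right_le_imp_le)
  with CB have "(norm z)\<^sup>2 \<le> C * Bopt"
    by (metis norm_ge_zero power_mono real_sqrt_pow2)
  then show ?thesis
    by (simp add: z_def C_def mult.commute)
qed

lemma summable_synthesis: "summable (\<lambda>n. scaleC (l2_seq c n) (f n))"
proof (rule summable_if_Cauchy_sums)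
  fix e :: real
  assume "0 < e"
  then obtain N where N: "\<And>m n. m \<ge> N \<Longrightarrow> norm (\<Sum>k\<in>{m..<n}. (cmod (l2_seq c k))\<^sup>2) < e\<^sup>2 / Bopt"
    using summable_power2_l2_seq[of c, unfolded summable_Cauchy] Bopt_pos
    by (metis divide_pos_pos zero_less_power)
  have "norm (\<Sum>k\<in>{m..<n}. scaleC (l2_seq c k) (f k)) < e" if "m \<ge> N" for m n
  proof -
    have "(norm (\<Sum>k\<in>{m..<n}. scaleC (l2_seq c k) (f k)))\<^sup>2
        \<le> Bopt * (\<Sum>k\<in>{m..<n}. (cmod (l2_seq c k))\<^sup>2)"
      by (rule power2_norm_sum_le) simp
    also have "\<dots> < Bopt * (e\<^sup>2 / Bopt)"
      using N[OF that, of n] Bopt_pos by (intro mult_strict_left_mono) (simp_all add: sum_nonneg)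
    also have "\<dots> = e\<^sup>2"
      using Bopt_pos by simp
    finally show ?thesis
      using \<open>0 < e\<close> by (simp add: power2_less_imp_less)
  qed
  then show "\<exists>N. \<forall>m\<ge>N. \<forall>n. norm (\<Sum>k\<in>{m..<n}. scaleC (l2_seq c k) (f k)) < e"
    by blast
qed

definition synthesis :: "l2 \<Rightarrow> 'a" where
  "synthesis c = (\<Sum>n. scaleC (l2_seq c n) (f n))"

lemma synthesis_sums: "(\<lambda>n. scaleC (l2_seq c n) (f n)) sums synthesis c"
  unfolding synthesis_def by (rule summable_sums[OF summable_synthesis])

lemma cinner_synthesis_sums: "(\<lambda>n. l2_seq c n * cinner (f n) y) sums cinner (synthesis c) y"
  using tendsto_cinner_left[OF synthesis_sums[of c, unfolded sums_def], of y]
  unfolding sums_def by (simp add: cinner.ip_sum_left cinner_scaleC_left)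

lemma power2_norm_synthesis_le: "(norm (synthesis c))\<^sup>2 \<le> Bopt * (l2.ip_norm c)\<^sup>2"
proof -
  have "(norm (\<Sum>n<N. scaleC (l2_seq c n) (f n)))\<^sup>2 \<le> Bopt * (l2.ip_norm c)\<^sup>2" for N
    using power2_norm_sum_le[of "{..<N}" "l2_seq c"] sum_power2_l2_seq_le[of "{..<N}" c] Bopt_pos
    by (simp add: order_trans)
  then have "norm (\<Sum>n<N. scaleC (l2_seq c n) (f n)) \<le> sqrt (Bopt * (l2.ip_norm c)\<^sup>2)" for N
    by (simp add: real_le_rsqrt)
  then have "norm (synthesis c) \<le> sqrt (Bopt * (l2.ip_norm c)\<^sup>2)"
    using tendsto_norm[OF synthesis_sums[of c, unfolded sums_def]]
    by (intro tendsto_le[OF _ tendsto_const]) auto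
  moreover have "0 \<le> Bopt * (l2.ip_norm c)\<^sup>2"
    using Bopt_pos by simp
  ultimately show ?thesis
    by (metis norm_ge_zero power_mono real_sqrt_pow2)
qed

lemma linear_synthesis: "Vector_Spaces.linear scaleC scaleC synthesis"
  unfolding Vector_Spaces.linear_iff
proof (intro conjI allI cvs.vector_space_axioms)
  fix x y :: l2 and c :: complex
  show "synthesis (x + y) = synthesis x + synthesis y"
  proof (rule cinner_eqI)
    fix z
    show "cinner (synthesis (x + y)) z = cinner (synthesis x + synthesis y) z"
      using sums_add[OF cinner_synthesis_sums[of x z] cinner_synthesis_sums[of y z]]
        cinner_synthesis_sums[of "x + y" z]
      by (simp add: cinner_add_left distrib_right sums_unique2)
  qed
  show "synthesis (scaleC c x) = scaleC c (synthesis x)"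
  proof (rule cinner_eqI)
    fix z
    show "cinner (synthesis (scaleC c x)) z = cinner (scaleC c (synthesis x)) z"
      using sums_mult[OF cinner_synthesis_sums[of x z], of c] cinner_synthesis_sums[of "scaleC c x" z]
      by (simp add: cinner_scaleC_left mult.assoc sums_unique2)
  qed
qed

interpretation synthesis: Vector_Spaces.linear scaleC scaleC synthesis
  by (rule linear_synthesis)

lemma synthesis_unit: "synthesis (l2_unit n) = f n"
proof -
  have "(\<lambda>k. scaleC (l2_seq (l2_unit n) k) (f k)) = (\<lambda>k. if k = n then f k else 0)"
    by (auto simp: l2_unit.rep_eq fun_eq_iff scaleC_one cvs.scale_zero_left)
  then show ?thesis
    using synthesis_sums[of "l2_unit n"] sums_single[of n f] by (simp add: sums_unique2)
qed

definition analysis :: "'a \<Rightarrow> l2" where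
  "analysis x = Abs_l2 (\<lambda>n. cinner x (f n))"

lemma l2_seq_analysis: "l2_seq (analysis x) n = cinner x (f n)"
  using summable_coeff_sq[of x] unfolding analysis_def coeff_sq_def[abs_def]
  by (simp add: l2_seq_Abs_l2)

lemma frame_op_eq_synthesis_analysis: "frame_op f x = synthesis (analysis x)"
  unfolding frame_op_def synthesis_def l2_seq_analysis ..

lemma l2_inner_analysis_left: "l2_inner (analysis x) u = cinner x (synthesis u)"
proof -
  have "(\<lambda>n. cnj (l2_seq u n * cinner (f n) x)) sums cnj (cinner (synthesis u) x)"
    using cinner_synthesis_sums[of u x] by (simp only: sums_cnj)
  moreover have "(\<lambda>n. cnj (l2_seq u n * cinner (f n) x)) = (\<lambda>n. l2_seq (analysis x) n * cnj (l2_seq u n))"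
    using cinner_commute[of x] by (simp add: fun_eq_iff l2_seq_analysis mult.commute)
  ultimately show ?thesis
    using l2_inner_sums[of "analysis x" u] cinner_commute[of x] by (metis sums_unique2)
qed

section \<open>Deleting elements from a frame\<close>

lemma summable_coeff_sq_outside: "summable (\<lambda>n. if n \<in> K then 0 else coeff_sq x n)"
  by (rule summable_comparison_test'[OF summable_coeff_sq[of x]]) (simp add: coeff_sq_nonneg)

lemma suminf_coeff_sq_split:
  assumes "finite K"
  shows "suminf (coeff_sq x) = (\<Sum>n. if n \<in> K then 0 else coeff_sq x n) + sum (coeff_sq x) K"
proof -
  have "(\<lambda>n. if n \<in> K then coeff_sq x n else 0) sums sum (coeff_sq x) K"
    by (rule sums_If_finite_set[OF assms])
  then have "(\<lambda>n. (if n \<in> K then 0 else coeff_sq x n) + (if n \<in> K then coeff_sq x n else 0))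
      sums ((\<Sum>n. if n \<in> K then 0 else coeff_sq x n) + sum (coeff_sq x) K)"
    by (intro sums_add summable_sums summable_coeff_sq_outside)
  then show ?thesis
    by (simp add: if_distrib[of "\<lambda>t. t + _"] sums_iff cong: if_cong)
qed

lemma infsum_coeff_sq_Compl:
  "coeff_sq x summable_on (- K) \<and> infsum (coeff_sq x) (- K) = (\<Sum>n. if n \<in> K then 0 else coeff_sq x n)"
proof -
  let ?g = "\<lambda>n. if n \<in> K then 0 else coeff_sq x n"
  have "(coeff_sq x summable_on (- K)) = (?g summable_on UNIV)"
    by (rule summable_on_cong_neutral) auto
  moreover have "infsum (coeff_sq x) (- K) = infsum ?g UNIV"
    by (rule infsum_cong_neutral) auto
  ultimately show ?thesis
    using summable_coeff_sq_outside[of K x] coeff_sq_nonneg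
      summable_on_UNIV_nonneg_real_iff[of ?g] infsum_eq_suminf_nonneg[of ?g]
    by simp
qed

text \<open>Since T w = 0 and w = e_k on K, we have f_k = - \<Sum>{w_l f_l | l \<notin> K}, and
  Cauchy-Schwarz bounds the k-th coefficient by the coefficients outside K.\<close>

lemma coeff_sq_le_outside:
  assumes "k \<in> K" "synthesis w = 0" "\<forall>l\<in>K. l2_seq w l = (if l = k then 1 else 0)"
  shows "coeff_sq x k \<le> (\<Sum>l. if l \<in> K then 0 else (cmod (l2_seq w l))\<^sup>2)
      * (\<Sum>n. if n \<in> K then 0 else coeff_sq x n)"
proof -
  define a where "a l = (if l \<in> K then 0 else l2_seq w l)" for l
  define b where "b l = (if l \<in> K then 0 else cinner x (f l))" for l
  have "(\<lambda>l. l2_seq w l * cinner (f l) x - (if l = k then cinner (f l) x else 0)) sums (0 - cinner (f k) x)"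
    using cinner_synthesis_sums[of w x] assms(2) by (intro sums_diff sums_single) simp_all
  moreover have "l2_seq w l * cinner (f l) x - (if l = k then cinner (f l) x else 0) = a l * cnj (b l)" for l
    using assms(1,3) cinner_commute[of x "f l"] by (auto simp: a_def b_def)
  ultimately have "(\<Sum>l. a l * cnj (b l)) = - cinner (f k) x"
    by (simp add: sums_iff)
  moreover have "summable (\<lambda>l. (cmod (a l))\<^sup>2)" "summable (\<lambda>l. (cmod (b l))\<^sup>2)"
    using summable_power2_l2_seq[of w] summable_coeff_sq[of x]
    by (auto simp: a_def b_def coeff_sq_def if_distrib[of "\<lambda>z. (cmod z)\<^sup>2"] cong: if_cong
        intro: summable_comparison_test')
  ultimately have "(cmod (cinner (f k) x))\<^sup>2 \<le> (\<Sum>l. (cmod (a l))\<^sup>2) * (\<Sum>l. (cmod (b l))\<^sup>2)"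
    using power2_cmod_suminf_le by fastforce
  then show ?thesis
    by (simp add: a_def b_def coeff_sq_def cmod_cinner_commute if_distrib[of "\<lambda>z. (cmod z)\<^sup>2"]
        cong: if_cong)
qed

lemma frame_on_Compl:
  assumes K: "finite K"
    and dual: "\<And>k. k \<in> K \<Longrightarrow> \<exists>w. synthesis w = 0 \<and> (\<forall>l\<in>K. l2_seq w l = (if l = k then 1 else 0))"
  shows "frame_on (- K) f"
proof -
  obtain W where W: "\<And>k. k \<in> K \<Longrightarrow> synthesis (W k) = 0"
    "\<And>k. k \<in> K \<Longrightarrow> \<forall>l\<in>K. l2_seq (W k) l = (if l = k then 1 else 0)"
    using dual by metis
  define C where "C = (\<Sum>k\<in>K. \<Sum>l. if l \<in> K then 0 else (cmod (l2_seq (W k) l))\<^sup>2)"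
  define R where "R x = (\<Sum>n. if n \<in> K then 0 else coeff_sq x n)" for x
  have C: "0 \<le> C"
    unfolding C_def
    by (intro sum_nonneg suminf_nonneg summable_comparison_test'[OF summable_power2_l2_seq]) auto
  obtain A where "0 < A" and A: "\<And>x. A * (norm x)\<^sup>2 \<le> suminf (coeff_sq x)"
    using frame_bounds by metis
  have "A / (1 + C) * (norm x)\<^sup>2 \<le> R x" for x
  proof -
    have "sum (coeff_sq x) K \<le> (\<Sum>k\<in>K. (\<Sum>l. if l \<in> K then 0 else (cmod (l2_seq (W k) l))\<^sup>2) * R x)"
      unfolding R_def using W by (intro sum_mono coeff_sq_le_outside) auto
    then have "suminf (coeff_sq x) \<le> (1 + C) * R x"
      unfolding suminf_coeff_sq_split[OF K, of x] R_def[symmetric] C_def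
      by (simp add: sum_distrib_left sum_distrib_right algebra_simps)
    then show ?thesis
      using A[of x] C by (simp add: field_simps)
  qed
  moreover have "R x \<le> Bopt * (norm x)\<^sup>2" for x
    using suminf_coeff_sq_split[OF K, of x] suminf_coeff_sq_le[of x] sum_nonneg[of K "coeff_sq x", OF coeff_sq_nonneg]
    unfolding R_def by linarith
  ultimately have "\<forall>x. coeff_sq x summable_on (- K) \<and> A / (1 + C) * (norm x)\<^sup>2 \<le> infsum (coeff_sq x) (- K)
      \<and> infsum (coeff_sq x) (- K) \<le> Bopt * (norm x)\<^sup>2"
    using infsum_coeff_sq_Compl by (simp add: R_def)
  then show ?thesis
    unfolding frame_on_def coeff_sq_def using \<open>0 < A\<close> C
    by (intro exI[of _ "A / (1 + C)"] exI[of _ Bopt]) simp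
qed

lemma independent_kernel_family:
  assumes U: "finite U" "l2.orthonormal U" and F0: "finite F0" "synthesis ` U \<subseteq> cvs.span F0"
  obtains V :: "l2 set" and y where "finite V" "card U \<le> card V + card F0"
    "\<And>i. i \<in> V \<Longrightarrow> synthesis (y i) = 0"
    "\<And>i. i \<in> V \<Longrightarrow> y i \<notin> cvs.span (y ` (V - {i}))"
proof -
  obtain R where R: "R \<subseteq> synthesis ` U" "cvs.independent R" "synthesis ` U \<subseteq> cvs.span R"
    using cvs.maximal_independent_subset by blast
  have card_R: "card R \<le> card F0"
    using cvs.independent_span_bound[OF F0(1) R(2)] R(1) F0(2) by blast
  obtain U' where U': "U' \<subseteq> U" "inj_on synthesis U'" "R = synthesis ` U'"
    using R(1) subset_image_inj by metis
  have "synthesis u \<in> synthesis ` cvs.span U'" if "u \<in> U" for u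
    using R(3) that unfolding U'(3) synthesis.span_image by blast
  then have "\<exists>q. q \<in> cvs.span U' \<and> synthesis q = synthesis u" if "u \<in> U" for u
    using that by (metis image_iff)
  then obtain p where p: "\<And>u. u \<in> U \<Longrightarrow> p u \<in> cvs.span U' \<and> synthesis (p u) = synthesis u"
    by metis
  define V where "V = U - U'"
  define y where "y u = u - p u" for u
  have "finite V"
    using U(1) by (simp add: V_def)
  moreover have "card U' = card R"
    using U'(2,3) by (simp add: card_image)
  then have "card U \<le> card V + card F0"
    using U'(1) U(1) card_R card_Diff_subset[of U' U] card_mono[of U U']
    by (simp add: V_def finite_subset)
  moreover have "synthesis (y i) = 0" if "i \<in> V" for i
    using that p[of i] by (simp add: y_def V_def synthesis.diff)
  moreover have "y i \<notin> cvs.span (y ` (V - {i}))" if "i \<in> V" for i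
  proof (rule l2.biorthogonal_not_in_span[of V y id, OF _ that])
    fix i j
    assume "i \<in> V" "j \<in> V"
    then show "l2_inner (y i) (id j) = (if i = j then 1 else 0)"
      using l2.ip_orthonormal_diff_span[OF U(2) U'(1)] p unfolding V_def y_def by simp
  qed
  ultimately show thesis
    by (rule that)
qed

lemma card_orthonormal_le:
  assumes U: "finite U" "l2.orthonormal U" and F0: "finite F0" "synthesis ` U \<subseteq> cvs.span F0"
    and E0: "\<And>K. finite K \<Longrightarrow> frame_on (- K) f \<Longrightarrow> card K \<le> E0"
  shows "card U \<le> E0 + card F0"
proof -
  obtain V :: "l2 set" and y where V: "finite V" "card U \<le> card V + card F0"
    and ker: "\<And>i. i \<in> V \<Longrightarrow> synthesis (y i) = 0"
    and indep: "\<And>i. i \<in> V \<Longrightarrow> y i \<notin> cvs.span (y ` (V - {i}))"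
    using independent_kernel_family[OF U F0] by blast
  obtain K where K: "finite K" "card K = card V"
    and deltas: "\<And>k. k \<in> K \<Longrightarrow> \<exists>w \<in> cvs.span (y ` V). \<forall>l\<in>K. l2_seq w l = (if l = k then 1 else 0)"
    using coordinates_of_independent_family[OF V(1) indep] by blast
  have "synthesis w = 0" if "w \<in> cvs.span (y ` V)" for w
    using synthesis.eq_0_on_span[OF _ that] ker by blast
  then have "frame_on (- K) f"
    using deltas by (intro frame_on_Compl[OF K(1)]) metis
  then show ?thesis
    using E0[OF K(1)] K(2) V(2) by linarith
qed

section \<open>The defect vectors\<close>

text \<open>d_n = (I - U U^* / B) e_n, with U = analysis and U^* = synthesis.\<close>

definition defect :: "nat \<Rightarrow> l2" where
  "defect n = l2_unit n - scaleC (1 / complex_of_real Bopt) (analysis (f n))"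

lemma synthesis_defect:
  "synthesis (defect n) = scaleC (1 / complex_of_real Bopt) (scaleR Bopt (f n) - frame_op f (f n))"
  using Bopt_pos
  by (simp add: defect_def synthesis.diff synthesis.scale synthesis_unit frame_op_eq_synthesis_analysis
      cvs.scale_right_diff_distrib flip: scaleC_of_real)

lemma l2_seq_defect_diag: "l2_seq (defect n) n = complex_of_real (1 - (norm (f n))\<^sup>2 / Bopt)"
  by (simp add: defect_def l2_unit.rep_eq l2_seq_analysis cinner_self_eq_power2_norm)

lemma l2_inner_defect:
  "l2_inner (defect n) u = cnj (l2_seq u n) - cinner (f n) (synthesis u) / complex_of_real Bopt"
  by (simp add: defect_def l2.ip_diff_left l2.ip_scaleC_left l2_inner_unit_left l2_inner_analysis_left)

lemma sum_power2_l2_inner_defect_le: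
  assumes "finite I"
  shows "(\<Sum>n\<in>I. (cmod (l2_inner (defect n) u))\<^sup>2) \<le> 4 * (l2.ip_norm u)\<^sup>2"
proof -
  have "(\<Sum>n\<in>I. (cmod (l2_inner (defect n) u))\<^sup>2)
      \<le> (\<Sum>n\<in>I. 2 * (cmod (l2_seq u n))\<^sup>2 + 2 * coeff_sq (synthesis u) n / Bopt\<^sup>2)"
  proof (rule sum_mono)
    fix n
    have "cmod (cinner (f n) (synthesis u) / complex_of_real Bopt) = cmod (cinner (synthesis u) (f n)) / Bopt"
      using Bopt_pos by (simp add: norm_divide cmod_cinner_commute)
    then show "(cmod (l2_inner (defect n) u))\<^sup>2
        \<le> 2 * (cmod (l2_seq u n))\<^sup>2 + 2 * coeff_sq (synthesis u) n / Bopt\<^sup>2"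
      using power2_cmod_diff_le[of "cnj (l2_seq u n)" "cinner (f n) (synthesis u) / complex_of_real Bopt"]
      by (simp add: l2_inner_defect coeff_sq_def power_divide)
  qed
  also have "\<dots> = 2 * (\<Sum>n\<in>I. (cmod (l2_seq u n))\<^sup>2) + 2 * sum (coeff_sq (synthesis u)) I / Bopt\<^sup>2"
    by (simp add: sum.distrib sum_distrib_left sum_divide_distrib)
  also have "\<dots> \<le> 2 * (l2.ip_norm u)\<^sup>2 + 2 * (Bopt * (Bopt * (l2.ip_norm u)\<^sup>2)) / Bopt\<^sup>2"
  proof -
    have "sum (coeff_sq (synthesis u)) I \<le> Bopt * (Bopt * (l2.ip_norm u)\<^sup>2)"
      using sum_coeff_sq_le[OF assms] power2_norm_synthesis_le[of u] Bopt_pos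
      by (meson mult_left_mono order.trans less_imp_le)
    then show ?thesis
      using sum_power2_l2_seq_le[OF assms, of u]
      by (intro add_mono mult_left_mono divide_right_mono) auto
  qed
  also have "\<dots> = 4 * (l2.ip_norm u)\<^sup>2"
    using Bopt_pos by (simp add: power2_eq_square)
  finally show ?thesis .
qed

text \<open>Expanding d_n in the orthonormal basis U gives
  \<Sum>_n (d_n)_n = \<Sum>_u \<Sum>_n \<langle>d_n, u\<rangle> u_n, and each inner sum is at most 2
  because \<Sum>_n |\<langle>d_n, u\<rangle>|^2 \<le> 4.\<close>

lemma sum_defect_diag_le:
  assumes I: "finite I" and U: "finite U" "l2.orthonormal U"
    and span: "\<And>n. n \<in> I \<Longrightarrow> defect n \<in> cvs.span U"
  shows "(\<Sum>n\<in>I. 1 - (norm (f n))\<^sup>2 / Bopt) \<le> 2 * real (card U)"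
proof -
  have expand: "l2_seq (defect n) n = (\<Sum>u\<in>U. l2_inner (defect n) u * l2_seq u n)" if "n \<in> I" for n
    using arg_cong[OF l2.orthonormal_expansion[OF U span[OF that]], of "\<lambda>x. l2_seq x n"]
    by (simp add: l2_seq_sum)
  have unit: "(l2.ip_norm u)\<^sup>2 = 1" if "u \<in> U" for u
    using U(2) that l2.power2_ip_norm[of u] unfolding l2.orthonormal_def by auto
  have "(\<Sum>n\<in>I. 1 - (norm (f n))\<^sup>2 / Bopt) = Re (\<Sum>n\<in>I. l2_seq (defect n) n)"
    by (simp add: l2_seq_defect_diag)
  also have "\<dots> \<le> cmod (\<Sum>n\<in>I. l2_seq (defect n) n)"
    by (rule complex_Re_le_cmod)
  also have "(\<Sum>n\<in>I. l2_seq (defect n) n) = (\<Sum>u\<in>U. \<Sum>n\<in>I. l2_inner (defect n) u * l2_seq u n)"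
    using expand by (simp add: sum.swap[of _ U I])
  also have "cmod \<dots> \<le> (\<Sum>u\<in>U. \<Sum>n\<in>I. cmod (l2_inner (defect n) u) * cmod (l2_seq u n))"
    by (rule order_trans[OF norm_sum sum_mono]) (rule order_trans[OF norm_sum], simp add: norm_mult)
  also have "\<dots> \<le> (\<Sum>u\<in>U. \<Sum>n\<in>I. (cmod (l2_inner (defect n) u))\<^sup>2 / 4 + (cmod (l2_seq u n))\<^sup>2)"
  proof (intro sum_mono)
    fix u n
    have "0 \<le> (cmod (l2_inner (defect n) u) - 2 * cmod (l2_seq u n))\<^sup>2"
      by simp
    then show "cmod (l2_inner (defect n) u) * cmod (l2_seq u n)
        \<le> (cmod (l2_inner (defect n) u))\<^sup>2 / 4 + (cmod (l2_seq u n))\<^sup>2"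
      by (simp add: power2_eq_square algebra_simps)
  qed
  also have "\<dots> \<le> (\<Sum>u\<in>U. 2)"
  proof (rule sum_mono)
    fix u
    assume "u \<in> U"
    then show "(\<Sum>n\<in>I. (cmod (l2_inner (defect n) u))\<^sup>2 / 4 + (cmod (l2_seq u n))\<^sup>2) \<le> 2"
      using sum_power2_l2_inner_defect_le[OF I, of u] sum_power2_l2_seq_le[OF I, of u] unit
      by (simp add: sum.distrib flip: sum_divide_distrib)
  qed
  finally show ?thesis
    by simp
qed

lemma summable_Bopt_minus_power2_norm:
  assumes F0: "finite F0" "range (\<lambda>x. scaleR Bopt x - frame_op f x) \<subseteq> cvs.span F0"
    and E0: "\<And>K. finite K \<Longrightarrow> frame_on (- K) f \<Longrightarrow> card K \<le> E0"
  shows "summable (\<lambda>n. Bopt - (norm (f n))\<^sup>2)"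
proof (rule summableI_nonneg_bounded)
  show "0 \<le> Bopt - (norm (f n))\<^sup>2" for n
    using power2_norm_le_Bopt[of n] by simp
  fix N
  obtain U where U: "finite U" "l2.orthonormal U" "cvs.span U = cvs.span (defect ` {..<N})"
    using l2.gram_schmidt[of "defect ` {..<N}"] by blast
  have "synthesis (defect n) \<in> cvs.span F0" for n
    using F0(2) unfolding synthesis_defect by (intro cvs.span_scale) blast
  then have defects: "synthesis ` defect ` {..<N} \<subseteq> cvs.span F0"
    by blast
  have "synthesis ` U \<subseteq> synthesis ` cvs.span (defect ` {..<N})"
    using U(3) cvs.span_superset by blast
  also have "\<dots> = cvs.span (synthesis ` defect ` {..<N})"
    by (simp add: synthesis.span_image)
  also have "\<dots> \<subseteq> cvs.span F0"
    using defects by (metis cvs.span_mono cvs.span_span)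
  finally have "synthesis ` U \<subseteq> cvs.span F0" .
  then have "card U \<le> E0 + card F0"
    using card_orthonormal_le[OF U(1,2) F0(1) _ E0] by blast
  moreover have "(\<Sum>n<N. 1 - (norm (f n))\<^sup>2 / Bopt) \<le> 2 * real (card U)"
    using U by (intro sum_defect_diag_le) (auto intro: cvs.span_base)
  moreover have "(\<Sum>n<N. Bopt - (norm (f n))\<^sup>2) = Bopt * (\<Sum>n<N. 1 - (norm (f n))\<^sup>2 / Bopt)"
    using Bopt_pos by (simp add: sum_distrib_left algebra_simps)
  ultimately show "(\<Sum>n<N. Bopt - (norm (f n))\<^sup>2) \<le> Bopt * (2 * real (E0 + card F0))"
    using Bopt_pos by (simp add: order_trans)
qed

end

lemma exists_nonzero_if_not_finite_dim_c:
  assumes "\<not> finite_dim_c (UNIV :: 'a::complex_vector set)"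
  shows "\<exists>x::'a. x \<noteq> 0"
  using assms unfolding finite_dim_c_def cspan_eq_span by (auto intro!: exI[of _ "{}"])

lemma card_le_excess:
  assumes "excess f = enat E" "finite K" "frame_on (- K) f"
  shows "card K \<le> E"
proof -
  have "ecard K \<le> excess f"
    unfolding excess_def using assms(3) by (auto intro: Sup_upper)
  then show ?thesis
    using assms(1,2) by (simp add: ecard_def)
qed

theorem proposition3p6:
  fixes f :: "nat \<Rightarrow> 'a::{complex_inner, complete_space}"
  assumes "separable_space (euclidean :: 'a topology)"
    and "\<not> finite_dim_c (UNIV :: 'a set)"
    and "frame f"
    and "B = opt_upper_bound f"
    and "excess f < \<infinity>"
    and "finite_dim_c (range (\<lambda>x. scaleR B x - frame_op f x))"
  shows "summable (\<lambda>n. B - (norm (f n))\<^sup>2)"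
proof -
  interpret nontrivial_frame f
    using assms(2,3) exists_nonzero_if_not_finite_dim_c by unfold_locales blast+
  obtain F0 where "finite F0" "range (\<lambda>x. scaleR B x - frame_op f x) \<subseteq> cvs.span F0"
    using assms(6) unfolding finite_dim_c_def cspan_eq_span by blast
  moreover obtain E where "excess f = enat E"
    using assms(5) by (cases "excess f") auto
  ultimately show ?thesis
    using summable_Bopt_minus_power2_norm card_le_excess assms(4) by blast
qed

end
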